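(* Fix a positive integer $n$, a nonzero $n$-partition $\lambda$ with $\lambda_n=0$, an $n$-semistandard tableau $T$ of shape $\lambda$, a column $1\le l<\lambda_1$, and a location $(j,i)>(l,1)$ in reading order. If $1\le h<k\le c_l$, then the most recent value of $P(T;l,h)$ relative to $(j,i)$ is strictly smaller than the most recent value of $P(T;l,k)$ relative to $(j,i)$. (That is, the most recent value of $P(T;l,k)$ relative to $(j,i)$ decreases as $k$ decreases.)
   Context: Identify $\lambda=(\lambda_1,\dots,\lambda_n)$ (weakly decreasing nonnegative integers, $\lambda_n=0$, $\lambda\ne0$) with its Young diagram; $c_j$ is the length of column $j$; $(j,i)$ is the box in column $j$, row $i$. Reading order: $(l,k)\le(j,i)$ iff $l<j$, or $l=j$ and $k\ge i$. An $n$-semistandard tableau $T$ of shape $\lambda$ has entries in $[n]$, weakly increasing along rows, strictly increasing down columns; $T(j,i)$ is its entry. The EWIS of a sequence $x_1,x_2,\dots$ is $x_{a_1},x_{a_2},\dots$ with $a_1=1$ and $a_b$ the smallest index $>a_{b-1}$ with $x_{a_b}\ge x_{a_{b-1}}$. Scanning paths: for each column $l$ and $k=c_l,c_l-1,\dots,1$ in turn, delete the boxes of the previously computed $P(T;l,k')$, $k'>k$ (leaving a semistandard tableau of valid shape); form the sequence of entries in the lowest box of each of columns $l,\dots,\lambda_1$ of the current shape (skipping empty columns); $P(T;l,k)$ is the set of locations of the terms of its EWIS (it starts at $(l,k)$). For $(j,i)>(l,1)$, the most recent location of $P(T;l,k)$ relative to $(j,i)$ is the latest location (in reading order) of $P(T;l,k)$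 strictly before $(j,i)$, and the most recent value is the entry of $T$ there. *)

theory Defs
  imports Main
begin

text \<open>Partitions are functions lam :: nat => nat, meaningful on rows 1..n.
  A box is a pair (column j, row i).\<close>

definition is_partition :: "nat \<Rightarrow> (nat \<Rightarrow> nat) \<Rightarrow> bool" where
  "is_partition n lam \<longleftrightarrow>
     (\<forall>i. 1 \<le> i \<and> i < n \<longrightarrow> lam (Suc i) \<le> lam i) \<and> lam n = 0 \<and>
     (\<exists>i\<in>{1..n}. lam i \<noteq> 0)"

definition boxes :: "nat \<Rightarrow> (nat \<Rightarrow> nat) \<Rightarrow> (nat \<times> nat) set" where
  "boxes n lam = {(j, i). 1 \<le> i \<and> i \<le> n \<and> 1 \<le> j \<and> j \<le> lam i}"

definition col_len :: "nat \<Rightarrow> (nat \<Rightarrow> nat) \<Rightarrow> nat \<Rightarrow> nat" where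
  "col_len n lam j = card {i. (j, i) \<in> boxes n lam}"

text \<open>T j i is the entry in column j, row i.\<close>
definition semistandard :: "nat \<Rightarrow> (nat \<Rightarrow> nat) \<Rightarrow> (nat \<Rightarrow> nat \<Rightarrow> nat) \<Rightarrow> bool" where
  "semistandard n lam T \<longleftrightarrow>
     (\<forall>(j, i)\<in>boxes n lam. 1 \<le> T j i \<and> T j i \<le> n) \<and>
     (\<forall>j i. (j, i) \<in> boxes n lam \<and> (Suc j, i) \<in> boxes n lam \<longrightarrow> T j i \<le> T (Suc j) i) \<and>
     (\<forall>j i. (j, i) \<in> boxes n lam \<and> (j, Suc i) \<in> boxes n lam \<longrightarrow> T j i < T j (Suc i))"

definition rd_less :: "nat \<times> nat \<Rightarrow> nat \<times> nat \<Rightarrow> bool" where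
  "rd_less p q \<longleftrightarrow> fst p < fst q \<or> (fst p = fst q \<and> snd p > snd q)"

text \<open>Earliest weakly increasing subsequence of a list of (location, value) pairs;
  returns the locations of its terms.\<close>
fun ewis_aux :: "nat \<Rightarrow> ('a \<times> nat) list \<Rightarrow> 'a list" where
  "ewis_aux v [] = []"
| "ewis_aux v ((p, x) # xs) = (if v \<le> x then p # ewis_aux x xs else ewis_aux v xs)"

fun ewis :: "('a \<times> nat) list \<Rightarrow> 'a list" where
  "ewis [] = []"
| "ewis ((p, x) # xs) = p # ewis_aux x xs"

definition lowest :: "(nat \<times> nat) set \<Rightarrow> nat \<Rightarrow> nat" where
  "lowest B j = Max {i. (j, i) \<in> B}"

definition scan_seq :: "(nat \<Rightarrow> nat) \<Rightarrow> (nat \<Rightarrow> nat \<Rightarrow> nat) \<Rightarrow> (nat \<times> nat) set \<Rightarrow> nat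
    \<Rightarrow> ((nat \<times> nat) \<times> nat) list" where
  "scan_seq lam T B l =
     map (\<lambda>j. ((j, lowest B j), T j (lowest B j)))
         (filter (\<lambda>j. \<exists>i. (j, i) \<in> B) [l..<Suc (lam 1)])"

definition scan_path_of :: "(nat \<Rightarrow> nat) \<Rightarrow> (nat \<Rightarrow> nat \<Rightarrow> nat) \<Rightarrow> (nat \<times> nat) set \<Rightarrow> nat
    \<Rightarrow> (nat \<times> nat) set" where
  "scan_path_of lam T B l = set (ewis (scan_seq lam T B l))"

text \<open>removed n lam T l m: union of the first m scanning paths of column l,
  i.e. of P(T;l,k') for k' = c_l, ..., c_l - m + 1.\<close>
fun removed :: "nat \<Rightarrow> (nat \<Rightarrow> nat) \<Rightarrow> (nat \<Rightarrow> nat \<Rightarrow> nat) \<Rightarrow> nat \<Rightarrow> nat \<Rightarrow> (nat \<times> nat) set" where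
  "removed n lam T l 0 = {}"
| "removed n lam T l (Suc m) =
     removed n lam T l m \<union> scan_path_of lam T (boxes n lam - removed n lam T l m) l"

definition scan_path :: "nat \<Rightarrow> (nat \<Rightarrow> nat) \<Rightarrow> (nat \<Rightarrow> nat \<Rightarrow> nat) \<Rightarrow> nat \<Rightarrow> nat
    \<Rightarrow> (nat \<times> nat) set" where
  "scan_path n lam T l k =
     scan_path_of lam T (boxes n lam - removed n lam T l (col_len n lam l - k)) l"

definition most_recent_loc :: "(nat \<times> nat) set \<Rightarrow> nat \<times> nat \<Rightarrow> nat \<times> nat" where
  "most_recent_loc P q =
     (THE p. p \<in> P \<and> rd_less p q \<and> (\<forall>p'\<in>P. rd_less p' q \<longrightarrow> p' = p \<or> rd_less p' p))"

definition most_recent_val :: "(nat \<Rightarrow> nat \<Rightarrow> nat) \<Rightarrow> (nat \<times> nat) set \<Rightarrow> nat \<times> nat \<Rightarrow> nat" where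
  "most_recent_val T P q = (case most_recent_loc P q of (a, b) \<Rightarrow> T a b)"

end

theory Submission
  imports Defs
begin

text \<open>
  The scanning path of column \<open>l\<close> in the remaining set of boxes \<open>B\<close> consists of the lowest box of
  every nonempty column \<open>c \<ge> l\<close> whose entry is at least the value of the previous term; write
  \<open>path_level T B l m\<close> for the value of the last term in a column \<open>\<le> m\<close>. The most recent value
  relative to \<open>(j, i)\<close> with \<open>l < j\<close> is the level at \<open>j\<close> if the path visits column \<open>j\<close> below
  row \<open>i\<close>, and the level at \<open>j - 1\<close> otherwise.

  Deleting the path lowers the bottom entry of every visited column strictly, since columns
  increase strictly downwards, and leaves all other columns alone. Induction over the columns
  then shows that the level of the next path is strictly smaller at every column, hence so is
  its most recent value. As \<open>P(T;l,h)\<close> is computed after \<open>P(T;l,k)\<close> for \<open>h < k\<close>, and every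
  path removes exactly one box of column \<open>l\<close>, the claim follows by chaining these steps.
\<close>

lemma lift_Suc_antimono_less_bounded:
  fixes f :: "nat \<Rightarrow> 'a::order"
  assumes "\<And>m. Suc m < N \<Longrightarrow> f (Suc m) < f m" and "a < b" and "b < N"
  shows "f b < f a"
  using assms(2,3)
  by (induction a b rule: less_Suc_induct) (auto intro: assms(1) order.strict_trans)

definition col_nonempty :: "(nat \<times> nat) set \<Rightarrow> nat \<Rightarrow> bool" where
  "col_nonempty B j \<longleftrightarrow> (\<exists>i. (j, i) \<in> B)"

definition bottom_entry :: "(nat \<Rightarrow> nat \<Rightarrow> nat) \<Rightarrow> (nat \<times> nat) set \<Rightarrow> nat \<Rightarrow> nat" where
  "bottom_entry T B j = T j (lowest B j)"

subsection \<open>Earliest weakly increasing subsequences\<close>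

fun ewis_level :: "nat \<Rightarrow> ('a \<times> nat) list \<Rightarrow> nat" where
  "ewis_level v [] = v"
| "ewis_level v ((p, x) # xs) = ewis_level (if v \<le> x then x else v) xs"

lemma ewis_aux_snoc:
  "ewis_aux v (xs @ [(p, x)]) = ewis_aux v xs @ (if ewis_level v xs \<le> x then [p] else [])"
  by (induction v xs rule: ewis_aux.induct) auto

lemma ewis_level_snoc:
  "ewis_level v (xs @ [(p, x)]) = (if ewis_level v xs \<le> x then x else ewis_level v xs)"
  by (induction v xs rule: ewis_aux.induct) auto

subsection \<open>Scanning paths column by column\<close>

fun path_level :: "(nat \<Rightarrow> nat \<Rightarrow> nat) \<Rightarrow> (nat \<times> nat) set \<Rightarrow> nat \<Rightarrow> nat \<Rightarrow> nat" where
  "path_level T B l 0 = bottom_entry T B l"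
| "path_level T B l (Suc m) =
     (if Suc m \<le> l then bottom_entry T B l
      else if col_nonempty B (Suc m) \<and> path_level T B l m \<le> bottom_entry T B (Suc m)
      then bottom_entry T B (Suc m) else path_level T B l m)"

definition on_path :: "(nat \<Rightarrow> nat \<Rightarrow> nat) \<Rightarrow> (nat \<times> nat) set \<Rightarrow> nat \<Rightarrow> nat \<Rightarrow> bool" where
  "on_path T B l m \<longleftrightarrow>
     col_nonempty B m \<and> (m = l \<or> (l < m \<and> path_level T B l (m - 1) \<le> bottom_entry T B m))"

lemma path_level_upto_start: "m \<le> l \<Longrightarrow> path_level T B l m = bottom_entry T B l"
  by (cases m) auto

lemma on_path_Suc:
  "l \<le> m \<Longrightarrow>
     on_path T B l (Suc m) \<longleftrightarrow>
       col_nonempty B (Suc m) \<and> path_level T B l m \<le> bottom_entry T B (Suc m)"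
  unfolding on_path_def by auto

lemma path_level_Suc:
  "l \<le> m \<Longrightarrow>
     path_level T B l (Suc m) =
       (if on_path T B l (Suc m) then bottom_entry T B (Suc m) else path_level T B l m)"
  by (simp add: on_path_Suc)

declare path_level.simps(2) [simp del]

lemma path_level_on_path: "on_path T B l m \<Longrightarrow> path_level T B l m = bottom_entry T B m"
  unfolding on_path_def by (cases m) (auto simp: path_level.simps(2) path_level_upto_start)

lemma path_level_off_path:
  "l < m \<Longrightarrow> \<not> on_path T B l m \<Longrightarrow> path_level T B l m = path_level T B l (m - 1)"
  using path_level_Suc[of l "m - 1" T B] by simp

lemma path_level_mono:
  assumes "l \<le> m" "m \<le> m'"
  shows "path_level T B l m \<le> path_level T B l m'"
  using assms(2)
proof (induction m' rule: dec_induct)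
  case (step k)
  then show ?case
    using assms(1) by (auto simp: path_level_Suc on_path_Suc)
qed simp

lemma ewis_aux_column_range:
  fixes T :: "nat \<Rightarrow> nat \<Rightarrow> nat" and B :: "(nat \<times> nat) set"
  defines "g \<equiv> \<lambda>j. ((j, lowest B j), T j (lowest B j))"
  assumes "l \<le> m"
  shows "ewis_level (bottom_entry T B l) (map g (filter (col_nonempty B) [Suc l..<Suc m]))
           = path_level T B l m \<and>
         set (ewis_aux (bottom_entry T B l) (map g (filter (col_nonempty B) [Suc l..<Suc m])))
           = {(c, lowest B c) | c. l < c \<and> c \<le> m \<and> on_path T B l c}"
  using assms(2)
proof (induction m rule: dec_induct)
  case base
  then show ?case by (simp add: path_level_upto_start)
next
  case (step k)
  have cols: "{(c, lowest B c) | c. l < c \<and> c \<le> Suc k \<and> on_path T B l c}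
     = {(c, lowest B c) | c. l < c \<and> c \<le> k \<and> on_path T B l c} \<union>
       (if on_path T B l (Suc k) then {(Suc k, lowest B (Suc k))} else {})"
    using step.hyps by (auto simp: le_Suc_eq)
  have cols_seq: "filter (col_nonempty B) [Suc l..<Suc (Suc k)] =
      filter (col_nonempty B) [Suc l..<Suc k] @ (if col_nonempty B (Suc k) then [Suc k] else [])"
    using step.hyps by simp
  have on_path: "on_path T B l (Suc k) \<longleftrightarrow>
      col_nonempty B (Suc k) \<and> path_level T B l k \<le> bottom_entry T B (Suc k)"
    using step.hyps(1) by (rule on_path_Suc)
  show ?case
  proof (cases "col_nonempty B (Suc k)")
    case True
    then show ?thesis
      using step by (simp add: cols_seq cols on_path path_level_Suc g_def ewis_level_snoc
        ewis_aux_snoc bottom_entry_def)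
  next
    case False
    then show ?thesis
      using step by (simp add: cols_seq cols on_path path_level_Suc)
  qed
qed

lemma scan_path_of_eq:
  assumes "col_nonempty B l" "l \<le> lam 1"
  shows "scan_path_of lam T B l = {(c, lowest B c) | c. l \<le> c \<and> c \<le> lam 1 \<and> on_path T B l c}"
proof -
  define g where "g = (\<lambda>j. ((j, lowest B j), T j (lowest B j)))"
  have "[l..<Suc (lam 1)] = l # [Suc l..<Suc (lam 1)]"
    using assms(2) by (simp add: upt_conv_Cons)
  then have "scan_seq lam T B l = g l # map g (filter (col_nonempty B) [Suc l..<Suc (lam 1)])"
    unfolding scan_seq_def g_def using assms(1) by (simp add: col_nonempty_def[abs_def])
  then have "scan_path_of lam T B l = insert (l, lowest B l)
      (set (ewis_aux (bottom_entry T B l) (map g (filter (col_nonempty B) [Suc l..<Suc (lam 1)]))))"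
    unfolding scan_path_of_def by (simp add: g_def bottom_entry_def)
  also have "\<dots> = insert (l, lowest B l) {(c, lowest B c) | c. l < c \<and> c \<le> lam 1 \<and> on_path T B l c}"
    using ewis_aux_column_range[where l = l and m = "lam 1" and B = B and T = T] assms g_def by simp
  also have "\<dots> = {(c, lowest B c) | c. l \<le> c \<and> c \<le> lam 1 \<and> on_path T B l c}"
    using assms by (auto simp: on_path_def le_less)
  finally show ?thesis .
qed

lemma path_level_attained:
  assumes "col_nonempty B l" "l \<le> m"
  obtains c where "l \<le> c" "c \<le> m" "on_path T B l c" "path_level T B l m = bottom_entry T B c"
    "\<And>c'. c < c' \<Longrightarrow> c' \<le> m \<Longrightarrow> \<not> on_path T B l c'"
proof -
  have "\<exists>c. l \<le> c \<and> c \<le> m \<and> on_path T B l c \<and> path_level T B l m = bottom_entry T B c \<and>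
     (\<forall>c'. c < c' \<and> c' \<le> m \<longrightarrow> \<not> on_path T B l c')"
    using assms(2)
  proof (induction m rule: dec_induct)
    case base
    then show ?case
      using assms(1) by (intro exI[of _ l]) (auto simp: on_path_def path_level_upto_start)
  next
    case (step k)
    show ?case
    proof (cases "on_path T B l (Suc k)")
      case True
      then show ?thesis
        using step.hyps by (intro exI[of _ "Suc k"]) (auto simp: path_level_Suc)
    next
      case False
      from step.IH obtain c where "l \<le> c" "c \<le> k" "on_path T B l c"
        "path_level T B l k = bottom_entry T B c" "\<forall>c'. c < c' \<and> c' \<le> k \<longrightarrow> \<not> on_path T B l c'"
        by blast
      then show ?thesis
        using False step.hyps by (intro exI[of _ c]) (auto simp: path_level_Suc le_Suc_eq)
    qed
  qed
  then show ?thesis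
    using that by blast
qed

lemma most_recent_locI:
  assumes "p \<in> P" "rd_less p q" "\<And>p'. p' \<in> P \<Longrightarrow> rd_less p' q \<Longrightarrow> p' = p \<or> rd_less p' p"
  shows "most_recent_loc P q = p"
  unfolding most_recent_loc_def
proof (rule the_equality)
  fix p0 assume "p0 \<in> P \<and> rd_less p0 q \<and> (\<forall>p'\<in>P. rd_less p' q \<longrightarrow> p' = p0 \<or> rd_less p' p0)"
  then show "p0 = p"
    using assms rd_less_def by (metis less_asym)
qed (use assms in blast)

definition recent_level :: "(nat \<Rightarrow> nat \<Rightarrow> nat) \<Rightarrow> (nat \<times> nat) set \<Rightarrow> nat \<Rightarrow> nat \<Rightarrow> nat \<Rightarrow> nat" where
  "recent_level T B l j i =
     (if on_path T B l j \<and> i < lowest B j then path_level T B l j else path_level T B l (j - 1))"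

lemma most_recent_val_scan_path_of:
  assumes "col_nonempty B l" "l < j" "j \<le> lam 1"
  shows "most_recent_val T (scan_path_of lam T B l) (j, i) = recent_level T B l j i"
proof -
  let ?P = "scan_path_of lam T B l"
  have P: "?P = {(c, lowest B c) | c. l \<le> c \<and> c \<le> lam 1 \<and> on_path T B l c}"
    using scan_path_of_eq assms by simp
  show ?thesis
  proof (cases "on_path T B l j \<and> i < lowest B j")
    case True
    have "most_recent_loc ?P (j, i) = (j, lowest B j)"
      by (rule most_recent_locI) (use P True assms in \<open>auto simp: rd_less_def\<close>)
    then show ?thesis
      using True path_level_on_path by (simp add: most_recent_val_def recent_level_def bottom_entry_def)
  next
    case False
    have "l \<le> j - 1"
      using assms(2) by simp
    obtain c where c: "l \<le> c" "c \<le> j - 1" "on_path T B l c"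
      "path_level T B l (j - 1) = bottom_entry T B c"
      "\<And>c'. c < c' \<Longrightarrow> c' \<le> j - 1 \<Longrightarrow> \<not> on_path T B l c'"
      using path_level_attained[OF assms(1) \<open>l \<le> j - 1\<close>, where T = T] by blast
    have "most_recent_loc ?P (j, i) = (c, lowest B c)"
    proof (rule most_recent_locI)
      show "(c, lowest B c) \<in> ?P" "rd_less (c, lowest B c) (j, i)"
        using P c assms by (auto simp: rd_less_def)
      fix p' assume "p' \<in> ?P" "rd_less p' (j, i)"
      then obtain c' where "p' = (c', lowest B c')" "on_path T B l c'" "c' \<le> j - 1"
        unfolding P rd_less_def using False by auto
      then show "p' = (c, lowest B c) \<or> rd_less p' (c, lowest B c)"
        using c(5) by (cases "c < c'") (auto simp: rd_less_def)
    qed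
    then show ?thesis
      using False c(4) by (auto simp: most_recent_val_def recent_level_def bottom_entry_def)
  qed
qed

lemma partition_antimono:
  assumes "is_partition n lam" "1 \<le> a" "a \<le> b" "b \<le> n"
  shows "lam b \<le> lam a"
  using assms(3,4)
proof (induction b rule: dec_induct)
  case (step k)
  then have "lam (Suc k) \<le> lam k"
    using assms(1,2) unfolding is_partition_def by auto
  then show ?case
    using step by simp
qed simp

lemma semistandard_col_strict:
  assumes "is_partition n lam" "semistandard n lam T"
    and "(c, a) \<in> boxes n lam" "(c, b) \<in> boxes n lam" "a < b"
  shows "T c a < T c b"
proof -
  have "(c, b) \<in> boxes n lam \<longrightarrow> T c a < T c b"
    using Suc_leI[OF \<open>a < b\<close>]
  proof (induction b rule: dec_induct)
    case base
    then show ?case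
      using assms(2,3) unfolding semistandard_def by blast
  next
    case (step k)
    show ?case
    proof
      assume k: "(c, Suc k) \<in> boxes n lam"
      then have "(c, k) \<in> boxes n lam"
        using partition_antimono[OF assms(1), of k "Suc k"] step.hyps assms(3)
        by (auto simp: boxes_def)
      then show "T c a < T c (Suc k)"
        using k step.IH assms(2) unfolding semistandard_def by fastforce
    qed
  qed
  then show ?thesis
    using assms(4) by simp
qed

lemma finite_col: "B \<subseteq> boxes n lam \<Longrightarrow> finite {i. (j, i) \<in> B}"
  by (rule finite_subset[of _ "{..n}"]) (auto simp: boxes_def)

lemma lowest_in: "B \<subseteq> boxes n lam \<Longrightarrow> col_nonempty B j \<Longrightarrow> (j, lowest B j) \<in> B"
  unfolding lowest_def col_nonempty_def using Max_in[OF finite_col[of B n lam j]] by auto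

lemma col_nonempty_iff_card:
  "B \<subseteq> boxes n lam \<Longrightarrow> col_nonempty B j \<longleftrightarrow> 0 < card {i. (j, i) \<in> B}"
  using finite_col[of B n lam j] by (auto simp: col_nonempty_def card_gt_0_iff)

lemma lowest_mono:
  assumes "B \<subseteq> boxes n lam" "B' \<subseteq> B" "col_nonempty B' j"
  shows "lowest B' j \<le> lowest B j"
  unfolding lowest_def
  using assms finite_col[OF assms(1)] by (intro Max_mono) (auto simp: col_nonempty_def)

subsection \<open>Removing a scanning path\<close>

locale path_removal =
  fixes n lam T l B
  assumes partition: "is_partition n lam" and semistandard: "semistandard n lam T"
    and subset_boxes: "B \<subseteq> boxes n lam" and col_nonempty_start: "col_nonempty B l"
    and start_le: "l \<le> lam 1"
begin

abbreviation B' :: "(nat \<times> nat) set" where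
  "B' \<equiv> B - scan_path_of lam T B l"

lemma col_B':
  assumes "l \<le> c" "c \<le> lam 1"
  shows "{i. (c, i) \<in> B'} =
     (if on_path T B l c then {i. (c, i) \<in> B} - {lowest B c} else {i. (c, i) \<in> B})"
  using scan_path_of_eq[where lam = lam and T = T, OF col_nonempty_start start_le] assms by auto

lemma off_path_unchanged:
  assumes "l \<le> c" "c \<le> lam 1" "\<not> on_path T B l c"
  shows "col_nonempty B' c = col_nonempty B c" "bottom_entry T B' c = bottom_entry T B c"
  using col_B'[OF assms(1,2)] assms(3)
  unfolding col_nonempty_def bottom_entry_def lowest_def by auto

lemma bottom_entry_decreases:
  assumes "l \<le> c" "c \<le> lam 1" "on_path T B l c" "col_nonempty B' c"
  shows "bottom_entry T B' c < bottom_entry T B c"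
proof -
  have B'_sub: "B' \<subseteq> boxes n lam"
    using subset_boxes by blast
  have "(c, lowest B' c) \<in> B'"
    using lowest_in[OF B'_sub assms(4)] .
  then have "lowest B' c \<noteq> lowest B c"
    using col_B'[OF assms(1,2)] assms(3) by auto
  then have "lowest B' c < lowest B c"
    using lowest_mono[OF subset_boxes _ assms(4)] by force
  moreover have "(c, lowest B' c) \<in> boxes n lam"
    using lowest_in[OF B'_sub assms(4)] B'_sub by blast
  moreover have "(c, lowest B c) \<in> boxes n lam"
    using lowest_in[OF subset_boxes] assms(3) subset_boxes by (auto simp: on_path_def)
  ultimately show ?thesis
    unfolding bottom_entry_def using semistandard_col_strict[OF partition semistandard] by blast
qed

lemma path_level_decreases:
  assumes "col_nonempty B' l" "l \<le> m" "m \<le> lam 1"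
  shows "path_level T B' l m < path_level T B l m"
  using assms(2,3)
proof (induction m rule: dec_induct)
  case base
  have "on_path T B l l"
    using col_nonempty_start by (simp add: on_path_def)
  then show ?case
    using bottom_entry_decreases[OF order.refl start_le _ assms(1)] by (simp add: path_level_upto_start)
next
  case (step k)
  then have IH: "path_level T B' l k < path_level T B l k"
    by simp
  show ?case
  proof (cases "on_path T B' l (Suc k)")
    case on_path': True
    then have col': "col_nonempty B' (Suc k)"
      by (simp add: on_path_def)
    show ?thesis
    proof (cases "on_path T B l (Suc k)")
      case True
      then show ?thesis
        using bottom_entry_decreases[of "Suc k"] on_path' col' step
        by (simp add: path_level_on_path)
    next
      case False
      then have "bottom_entry T B (Suc k) < path_level T B l k"
        using off_path_unchanged[of "Suc k"] col' step by (auto simp: on_path_Suc)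
      then show ?thesis
        using off_path_unchanged[of "Suc k"] False on_path' step
        by (simp add: path_level_on_path path_level_off_path)
    qed
  next
    case False
    then show ?thesis
      using IH path_level_mono[of l k "Suc k" T B] step.hyps by (simp add: path_level_off_path)
  qed
qed

lemma recent_level_decreases:
  assumes "col_nonempty B' l" "l < j" "j \<le> lam 1"
  shows "recent_level T B' l j i < recent_level T B l j i"
proof (cases "on_path T B' l j \<and> i < lowest B' j")
  case below': True
  have "recent_level T B l j i = path_level T B l j"
  proof (cases "on_path T B l j")
    case True
    moreover have "lowest B' j \<le> lowest B j"
      using lowest_mono[OF subset_boxes] below' by (auto simp: on_path_def)
    ultimately show ?thesis
      using below' by (simp add: recent_level_def)
  next
    case False
    then show ?thesis
      using assms(2) by (simp add: recent_level_def path_level_off_path)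
  qed
  then show ?thesis
    using below' path_level_decreases[OF assms(1)] assms by (simp add: recent_level_def)
next
  case False
  have "path_level T B l (j - 1) \<le> recent_level T B l j i"
    using path_level_mono[of l "j - 1" j T B] assms(2) by (simp add: recent_level_def)
  moreover have "recent_level T B' l j i = path_level T B' l (j - 1)"
    unfolding recent_level_def using False by (rule if_not_P)
  moreover have "path_level T B' l (j - 1) < path_level T B l (j - 1)"
    using path_level_decreases[OF assms(1)] assms by simp
  ultimately show ?thesis
    by linarith
qed

lemma card_col_start: "card {i. (l, i) \<in> B'} = card {i. (l, i) \<in> B} - 1"
proof -
  have "on_path T B l l"
    using col_nonempty_start by (simp add: on_path_def)
  then have "{i. (l, i) \<in> B'} = {i. (l, i) \<in> B} - {lowest B l}"
    using col_B'[OF order.refl start_le] by simp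
  moreover have "lowest B l \<in> {i. (l, i) \<in> B}"
    using lowest_in[OF subset_boxes col_nonempty_start] by simp
  ultimately show ?thesis
    using finite_col[OF subset_boxes] by simp
qed

end

definition remaining_boxes :: "nat \<Rightarrow> (nat \<Rightarrow> nat) \<Rightarrow> (nat \<Rightarrow> nat \<Rightarrow> nat) \<Rightarrow> nat \<Rightarrow> nat
    \<Rightarrow> (nat \<times> nat) set" where
  "remaining_boxes n lam T l m = boxes n lam - removed n lam T l m"

lemma remaining_boxes_Suc:
  "remaining_boxes n lam T l (Suc m) =
     remaining_boxes n lam T l m - scan_path_of lam T (remaining_boxes n lam T l m) l"
  unfolding remaining_boxes_def by auto

lemma remaining_boxes_subset: "remaining_boxes n lam T l m \<subseteq> boxes n lam"
  unfolding remaining_boxes_def by blast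

lemma card_col_remaining_boxes:
  assumes "is_partition n lam" "semistandard n lam T" "l \<le> lam 1" "m \<le> col_len n lam l"
  shows "card {i. (l, i) \<in> remaining_boxes n lam T l m} = col_len n lam l - m"
  using assms(4)
proof (induction m)
  case 0
  then show ?case
    by (simp add: remaining_boxes_def col_len_def)
next
  case (Suc m)
  then have card: "card {i. (l, i) \<in> remaining_boxes n lam T l m} = col_len n lam l - m"
    by simp
  interpret path_removal n lam T l "remaining_boxes n lam T l m"
    using assms remaining_boxes_subset card Suc.prems
    by unfold_locales (simp_all add: col_nonempty_iff_card[OF remaining_boxes_subset])
  show ?case
    using card card_col_start by (simp add: remaining_boxes_Suc)
qed

lemma col_nonempty_remaining_boxes:
  assumes "is_partition n lam" "semistandard n lam T" "l \<le> lam 1" "m < col_len n lam l"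
  shows "col_nonempty (remaining_boxes n lam T l m) l"
  using card_col_remaining_boxes[OF assms(1-3), of m] assms(4)
  by (simp add: col_nonempty_iff_card[OF remaining_boxes_subset])

lemma recent_level_remaining_boxes_Suc:
  assumes "is_partition n lam" "semistandard n lam T" "l \<le> lam 1" "Suc m < col_len n lam l"
    and "l < j" "j \<le> lam 1"
  shows "recent_level T (remaining_boxes n lam T l (Suc m)) l j i
           < recent_level T (remaining_boxes n lam T l m) l j i"
proof -
  have "col_nonempty (remaining_boxes n lam T l m) l"
    using col_nonempty_remaining_boxes[OF assms(1-3)] assms(4) by simp
  then interpret path_removal n lam T l "remaining_boxes n lam T l m"
    using assms(1-3) remaining_boxes_subset by unfold_locales
  show ?thesis
    using recent_level_decreases col_nonempty_remaining_boxes[OF assms(1-4)] assms(5,6)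
    by (simp add: remaining_boxes_Suc)
qed

theorem lemma3p1:
  fixes n :: nat and lam :: "nat \<Rightarrow> nat" and T :: "nat \<Rightarrow> nat \<Rightarrow> nat"
    and l j i h k :: nat
  assumes "n \<ge> 1"
    and "is_partition n lam"
    and "semistandard n lam T"
    and "1 \<le> l" and "l < lam 1"
    and "(j, i) \<in> boxes n lam"
    and "rd_less (l, 1) (j, i)"
    and "1 \<le> h" and "h < k" and "k \<le> col_len n lam l"
  shows "most_recent_val T (scan_path n lam T l h) (j, i)
           < most_recent_val T (scan_path n lam T l k) (j, i)"
proof -
  define c where "c = col_len n lam l"
  have "lam i \<le> lam 1"
    using assms(6) partition_antimono[OF assms(2), of 1 i] by (auto simp: boxes_def)
  then have j: "l < j" "j \<le> lam 1"
    using assms(6,7) by (auto simp: boxes_def rd_less_def)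
  have recent: "most_recent_val T (scan_path n lam T l k') (j, i)
      = recent_level T (remaining_boxes n lam T l (c - k')) l j i" if "1 \<le> k'" "k' \<le> c" for k'
    using most_recent_val_scan_path_of[where lam = lam and T = T, OF _ j]
      col_nonempty_remaining_boxes[OF assms(2,3), of l "c - k'"] assms(5) that
    unfolding scan_path_def remaining_boxes_def[symmetric] c_def by simp
  have step: "recent_level T (remaining_boxes n lam T l (Suc m)) l j i
      < recent_level T (remaining_boxes n lam T l m) l j i" if "Suc m < c" for m
    using recent_level_remaining_boxes_Suc[OF assms(2,3) _ _ j] assms(5) that
    unfolding c_def by simp
  have "c - k < c - h" "c - h < c"
    using assms(8-10) unfolding c_def by auto
  with step have "recent_level T (remaining_boxes n lam T l (c - h)) l j i
      < recent_level T (remaining_boxes n lam T l (c - k)) l j i"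
    by (rule lift_Suc_antimono_less_bounded
        [where f = "\<lambda>m. recent_level T (remaining_boxes n lam T l m) l j i"])
  then show ?thesis
    using recent assms(8-10) unfolding c_def by simp
qed

end
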